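(* Let $(\mathfrak g,r)$ be a triangular Lie bialgebra with $r:\mathfrak g^*\to\mathfrak g$ invertible. For $\lambda,\mu\in\mathbb R$, $\lambda\neq0$, define $J_{\lambda,\mu}:\mathcal D(\mathfrak g)\to\mathcal D(\mathfrak g)$ by $J_{\lambda,\mu}(x,a^* )=(\lambda r(a^* )+\mu x,\ \frac{-1-\mu^2}{\lambda}r^{-1}(x)-\mu a^* )$, and let $\tilde r_{\pm,\lambda,\mu}=J_{\lambda,\mu}\varphi^{-1}\pm\varphi^{-1}$, regarded as elements of $\mathcal D(\mathfrak g)\otimes\mathcal D(\mathfrak g)$. Then for each sign $\tilde r_{\pm,\lambda,\mu}$ is a solution of the type II CYBE in $\mathcal D(\mathfrak g)$ whose symmetric part is invariant and invertible; hence $(\mathcal D(\mathfrak g),\tilde r_{\pm,\lambda,\mu})$ is a factorizable type II quasitriangular Lie bialgebra.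
   Context: $\mathfrak g$ a finite-dimensional real Lie algebra; $t\in V\otimes V$ is identified with $t:V^*\to V$ via $\langle t(a),b\rangle=\langle a\otimes b,t\rangle$. For $t=\sum a_i\otimes b_i$: $[t_{12},t_{13}]=\sum[a_i,a_j]\otimes b_i\otimes b_j$, $[t_{12},t_{23}]=\sum a_i\otimes[b_i,a_j]\otimes b_j$, $[t_{13},t_{23}]=\sum a_i\otimes a_j\otimes[b_i,b_j]$; with $t+\sigma(t)=\sum c_k\otimes d_k$, $[t_{13}+t_{31},t_{23}+t_{32}]=\sum c_k\otimes c_l\otimes[d_k,d_l]$. CYBE: $[t_{12},t_{13}]+[t_{12},t_{23}]+[t_{13},t_{23}]=0$; type II CYBE: the same left side equals $\frac12[t_{13}+t_{31},t_{23}+t_{32}]$. $(\mathfrak g,r)$ triangular: $r$ skew-symmetric solution of the CYBE. $\langle\mathrm{ad}^*(x)a^*,y\rangle=-\langle a^*,[x,y]\rangle$; $[a^*,b^*]_\delta=\mathrm{ad}^*(r(a^* ))b^*-\mathrm{ad}^*(r(b^* ))a^*$; $\langle\mathrm{ad}^*(a^* )x,b^*\rangle=-\langle x,[a^*,b^*]_\delta\rangle$. $\mathcal D(\mathfrak g)=\mathfrak g\oplus\mathfrak g^*$ with bracket $[(x,a^* ),(y,b^* )]=([x,y]+\mathrm{ad}^*(a^* )y-\mathrm{ad}^*(b^* )x,[a^*,b^*]_\delta+\mathrm{ad}^*(x)b^*-\mathrm{ad}^*(y)a^* )$ and form $\mathfrak B_p((x,a^* ),(y,b^* ))=\langle a^*,y\rangle+\langle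 x,b^*\rangle$; $\varphi$ is defined by $\mathfrak B_p(X,Y)=\langle\varphi(X),Y\rangle$. A type II quasitriangular Lie bialgebra is a coboundary Lie bialgebra $\delta(X)=(\mathrm{ad}(X)\otimes\mathrm{id}+\mathrm{id}\otimes\mathrm{ad}(X))t$ with $t$ a solution of the type II CYBE; it is factorizable if the symmetric part of $t$ is invertible. *)

theory Defs
  imports Complex_Main
begin

text \<open>A finite-dimensional real Lie algebra g is modelled on the coordinate
space 'i \<Rightarrow> real for a finite index type 'i (a basis of g); its dual g* is modelled on the
same space with the coordinate pairing. Tensors in V \<otimes> V are coordinate arrays
'i \<Rightarrow> 'i \<Rightarrow> real with respect to the basis vectors bv p, and 3-tensors are
'i \<Rightarrow> 'i \<Rightarrow> 'i \<Rightarrow> real.\<close>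

type_synonym 'i vec = "'i \<Rightarrow> real"
type_synonym 'i bracket = "'i vec \<Rightarrow> 'i vec \<Rightarrow> 'i vec"
type_synonym 'i tensor2 = "'i \<Rightarrow> 'i \<Rightarrow> real"

definition bv :: "'i \<Rightarrow> 'i vec" where
  "bv p = (\<lambda>j. if j = p then 1 else 0)"

definition pair :: "('i::finite) vec \<Rightarrow> 'i vec \<Rightarrow> real" where
  "pair a x = (\<Sum>i\<in>UNIV. a i * x i)"

definition lie_algebra :: "('i::finite) bracket \<Rightarrow> bool" where
  "lie_algebra B \<longleftrightarrow>
     (\<forall>x y z a b. B (\<lambda>i. a * x i + b * y i) z = (\<lambda>k. a * B x z k + b * B y z k)) \<and>
     (\<forall>x y z a b. B z (\<lambda>i. a * x i + b * y i) = (\<lambda>k. a * B z x k + b * B z y k)) \<and>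
     (\<forall>x. B x x = (\<lambda>k. 0)) \<and>
     (\<forall>x y z. (\<lambda>k. B x (B y z) k + B y (B z x) k + B z (B x y) k) = (\<lambda>k. 0))"

text \<open>t \<in> V \<otimes> V viewed as the map t : V* \<rightarrow> V with \<langle>t(a),b\<rangle> = \<langle>a \<otimes> b, t\<rangle>.\<close>
definition tensor_map :: "('i::finite) tensor2 \<Rightarrow> 'i vec \<Rightarrow> 'i vec" where
  "tensor_map t a = (\<lambda>j. \<Sum>i\<in>UNIV. a i * t i j)"

definition tensor_of :: "('i vec \<Rightarrow> 'i vec) \<Rightarrow> 'i tensor2" where
  "tensor_of M = (\<lambda>p q. M (bv p) q)"

definition flip :: "'i tensor2 \<Rightarrow> 'i tensor2" where
  "flip t = (\<lambda>p q. t q p)"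

definition sym_part :: "'i tensor2 \<Rightarrow> 'i tensor2" where
  "sym_part t = (\<lambda>p q. (t p q + t q p) / 2)"

text \<open>Coordinates of [t12,t13], [t12,t23], [t13,t23].\<close>
definition T12_13 :: "('i::finite) bracket \<Rightarrow> 'i tensor2 \<Rightarrow> 'i \<Rightarrow> 'i \<Rightarrow> 'i \<Rightarrow> real" where
  "T12_13 B t u v w = (\<Sum>p\<in>UNIV. \<Sum>p'\<in>UNIV. t p v * t p' w * B (bv p) (bv p') u)"

definition T12_23 :: "('i::finite) bracket \<Rightarrow> 'i tensor2 \<Rightarrow> 'i \<Rightarrow> 'i \<Rightarrow> 'i \<Rightarrow> real" where
  "T12_23 B t u v w = (\<Sum>q\<in>UNIV. \<Sum>p'\<in>UNIV. t u q * t p' w * B (bv q) (bv p') v)"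

definition T13_23 :: "('i::finite) bracket \<Rightarrow> 'i tensor2 \<Rightarrow> 'i \<Rightarrow> 'i \<Rightarrow> 'i \<Rightarrow> real" where
  "T13_23 B t u v w = (\<Sum>q\<in>UNIV. \<Sum>q'\<in>UNIV. t u q * t v q' * B (bv q) (bv q') w)"

definition cybe_lhs :: "('i::finite) bracket \<Rightarrow> 'i tensor2 \<Rightarrow> 'i \<Rightarrow> 'i \<Rightarrow> 'i \<Rightarrow> real" where
  "cybe_lhs B t u v w = T12_13 B t u v w + T12_23 B t u v w + T13_23 B t u v w"

definition cybe :: "('i::finite) bracket \<Rightarrow> 'i tensor2 \<Rightarrow> bool" where
  "cybe B t \<longleftrightarrow> (\<forall>u v w. cybe_lhs B t u v w = 0)"

text \<open>Type II CYBE: lhs = 1/2 [t13 + t31, t23 + t32], with t + \<sigma>(t) = \<Sum> c_k \<otimes> d_k.\<close>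
definition cybe_II :: "('i::finite) bracket \<Rightarrow> 'i tensor2 \<Rightarrow> bool" where
  "cybe_II B t \<longleftrightarrow>
     (\<forall>u v w. cybe_lhs B t u v w = (1/2) * T13_23 B (\<lambda>p q. t p q + t q p) u v w)"

definition triangular :: "('i::finite) bracket \<Rightarrow> 'i tensor2 \<Rightarrow> bool" where
  "triangular B r \<longleftrightarrow> lie_algebra B \<and> (\<forall>p q. r p q = - r q p) \<and> cybe B r"

text \<open>(ad X \<otimes> id + id \<otimes> ad X) t\<close>
definition ad_tensor :: "('i::finite) bracket \<Rightarrow> 'i vec \<Rightarrow> 'i tensor2 \<Rightarrow> 'i tensor2" where
  "ad_tensor B X t = (\<lambda>u v. (\<Sum>p\<in>UNIV. t p v * B X (bv p) u) + (\<Sum>q\<in>UNIV. t u q * B X (bv q) v))"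

definition invariant_tensor :: "('i::finite) bracket \<Rightarrow> 'i tensor2 \<Rightarrow> bool" where
  "invariant_tensor B s \<longleftrightarrow> (\<forall>X. ad_tensor B X s = (\<lambda>u v. 0))"

definition coboundary :: "('i::finite) bracket \<Rightarrow> 'i tensor2 \<Rightarrow> 'i vec \<Rightarrow> 'i tensor2" where
  "coboundary B t X = ad_tensor B X t"

text \<open>Lie bialgebra (g, [,], \<delta>): \<delta> linear, skew, its dual bracket
 \<langle>[\<xi>,\<eta>], x\<rangle> = \<langle>\<xi> \<otimes> \<eta>, \<delta>(x)\<rangle> is a Lie bracket on g*, and \<delta> is a 1-cocycle.\<close>
definition cobracket_dual :: "('i::finite vec \<Rightarrow> 'i tensor2) \<Rightarrow> 'i bracket" where
  "cobracket_dual \<delta> \<xi> \<eta> = (\<lambda>k. \<Sum>p\<in>UNIV. \<Sum>q\<in>UNIV. \<xi> p * \<eta> q * \<delta> (bv k) p q)"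

definition lie_bialgebra :: "('i::finite) bracket \<Rightarrow> ('i vec \<Rightarrow> 'i tensor2) \<Rightarrow> bool" where
  "lie_bialgebra B \<delta> \<longleftrightarrow>
     lie_algebra B \<and>
     (\<forall>x y a b. \<delta> (\<lambda>i. a * x i + b * y i) = (\<lambda>u v. a * \<delta> x u v + b * \<delta> y u v)) \<and>
     (\<forall>x u v. \<delta> x u v = - \<delta> x v u) \<and>
     lie_algebra (cobracket_dual \<delta>) \<and>
     (\<forall>x y. \<delta> (B x y) = (\<lambda>u v. ad_tensor B x (\<delta> y) u v - ad_tensor B y (\<delta> x) u v))"

definition typeII_quasitriangular :: "('i::finite) bracket \<Rightarrow> 'i tensor2 \<Rightarrow> bool" where
  "typeII_quasitriangular B t \<longleftrightarrow> lie_bialgebra B (coboundary B t) \<and> cybe_II B t"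

definition factorizable_typeII :: "('i::finite) bracket \<Rightarrow> 'i tensor2 \<Rightarrow> bool" where
  "factorizable_typeII B t \<longleftrightarrow> typeII_quasitriangular B t \<and> bij (tensor_map (sym_part t))"

definition coad :: "('i::finite) bracket \<Rightarrow> 'i vec \<Rightarrow> 'i vec \<Rightarrow> 'i vec" where
  "coad B x a = (\<lambda>j. - pair a (B x (bv j)))"

definition dual_br :: "('i::finite) bracket \<Rightarrow> 'i tensor2 \<Rightarrow> 'i bracket" where
  "dual_br B r a b = (\<lambda>j. coad B (tensor_map r a) b j - coad B (tensor_map r b) a j)"

definition coad_dual :: "('i::finite) bracket \<Rightarrow> 'i tensor2 \<Rightarrow> 'i vec \<Rightarrow> 'i vec \<Rightarrow> 'i vec" where
  "coad_dual B r a x = (\<lambda>j. - pair x (dual_br B r a (bv j)))"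

text \<open>D(g) = g \<oplus> g* modelled on ('i + 'i) \<Rightarrow> real.\<close>
definition dpair :: "'i vec \<Rightarrow> 'i vec \<Rightarrow> ('i + 'i) vec" where
  "dpair x a = (\<lambda>k. case k of Inl i \<Rightarrow> x i | Inr i \<Rightarrow> a i)"

definition dfst :: "('i + 'i) vec \<Rightarrow> 'i vec" where
  "dfst X = (\<lambda>i. X (Inl i))"

definition dsnd :: "('i + 'i) vec \<Rightarrow> 'i vec" where
  "dsnd X = (\<lambda>i. X (Inr i))"

definition double_br :: "('i::finite) bracket \<Rightarrow> 'i tensor2 \<Rightarrow> ('i + 'i) bracket" where
  "double_br B r X Y =
     dpair (\<lambda>k. B (dfst X) (dfst Y) k + coad_dual B r (dsnd X) (dfst Y) k
                 - coad_dual B r (dsnd Y) (dfst X) k)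
           (\<lambda>k. dual_br B r (dsnd X) (dsnd Y) k + coad B (dfst X) (dsnd Y) k
                 - coad B (dfst Y) (dsnd X) k)"

definition Bp :: "('i::finite + 'i) vec \<Rightarrow> ('i + 'i) vec \<Rightarrow> real" where
  "Bp X Y = pair (dsnd X) (dfst Y) + pair (dfst X) (dsnd Y)"

definition phi :: "('i::finite + 'i) vec \<Rightarrow> ('i + 'i) vec" where
  "phi X = (\<lambda>k. Bp X (bv k))"

definition Jmap :: "('i::finite) tensor2 \<Rightarrow> real \<Rightarrow> real \<Rightarrow> ('i + 'i) vec \<Rightarrow> ('i + 'i) vec" where
  "Jmap r lam mu X =
     dpair (\<lambda>k. lam * tensor_map r (dsnd X) k + mu * dfst X k)
           (\<lambda>k. ((-1 - mu^2) / lam) * inv (tensor_map r) (dfst X) k - mu * dsnd X k)"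

text \<open>r~_{\<pm>,\<lambda>,\<mu>} = J \<phi>^{-1} \<pm> \<phi>^{-1}, sign \<sigma> \<in> {1,-1}, as an element of D \<otimes> D.\<close>
definition rtilde :: "('i::finite) tensor2 \<Rightarrow> real \<Rightarrow> real \<Rightarrow> real \<Rightarrow> ('i + 'i) tensor2" where
  "rtilde r lam mu \<sigma> =
     tensor_of (\<lambda>\<xi>. (\<lambda>k. Jmap r lam mu (inv phi \<xi>) k + \<sigma> * inv phi \<xi> k))"

end

theory Submission
  imports Defs
begin

(* The
   proposition is an instance of a general fact about a Lie algebra D carrying an
   invariant nondegenerate symmetric form, given by an involutive self-adjoint
   phi = phi^{-1}, together with a skew-adjoint operator J satisfying the "complex"
   modified classical Yang-Baxter equation
       [JX, JY] = J[JX, Y] + J[X, JY] + [X, Y]: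
   for sigma = 1 or -1 the tensor of J phi^{-1} + sigma phi^{-1} solves the type II CYBE,
   its symmetric part sigma phi^{-1} is invariant and invertible, and its coboundary is a
   Lie bialgebra structure (the dual bracket is [X,Y]_J = [X,JY] + [JX,Y] transported
   by phi).
   The remaining work is to check that the Drinfeld double of a triangular Lie
   bialgebra with invertible r fits this locale (locale invertible_triangular): the
   triangularity of r says that r is a Lie homomorphism from (g*, [,]_delta) to g; the
   shear (x, a) |-> (x + r a, a) identifies the double with the semidirect product
   g |x g* (so the double bracket is a Lie bracket and B_p is invariant); and J_{lam,mu}
   is skew for B_p and satisfies the modified CYBE above by a direct computation. *)

section \<open>Linear maps on coordinate spaces\<close>

definition lin :: "('a::finite vec \<Rightarrow> 'b vec) \<Rightarrow> bool" where
  "lin f \<longleftrightarrow> (\<forall>x y a b. f (\<lambda>i. a * x i + b * y i) = (\<lambda>k. a * f x k + b * f y k))"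

lemma linI: "(\<And>x y a b. f (\<lambda>i. a * x i + b * y i) = (\<lambda>k. a * f x k + b * f y k)) \<Longrightarrow> lin f"
  unfolding lin_def by blast

lemma linD: "lin f \<Longrightarrow> f (\<lambda>i. a * x i + b * y i) = (\<lambda>k. a * f x k + b * f y k)"
  unfolding lin_def by blast

lemma lin_add: "lin f \<Longrightarrow> f (\<lambda>i. x i + y i) = (\<lambda>k. f x k + f y k)"
  using linD[of f 1 x 1 y] by simp

lemma lin_diff: "lin f \<Longrightarrow> f (\<lambda>i. x i - y i) = (\<lambda>k. f x k - f y k)"
  using linD[of f 1 x "-1" y] by simp

lemma lin_smult: "lin f \<Longrightarrow> f (\<lambda>i. a * x i) = (\<lambda>k. a * f x k)"
  using linD[of f a x 0 x] by simp

lemma lin_neg: "lin f \<Longrightarrow> f (\<lambda>i. - x i) = (\<lambda>k. - f x k)"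
  using lin_smult[of f "-1" x] by simp

lemma lin_zero: "lin f \<Longrightarrow> f (\<lambda>i. 0) = (\<lambda>k. 0)"
  using lin_smult[of f 0 "\<lambda>i. 0"] by simp

lemmas lin_rules = lin_add lin_diff lin_smult lin_neg

lemma lin_comp: "lin f \<Longrightarrow> lin g \<Longrightarrow> lin (\<lambda>x. f (g x))"
  unfolding lin_def by simp

lemma lin_sum:
  assumes "lin f" and "finite A"
  shows "f (\<lambda>i. \<Sum>p\<in>A. c p * v p i) = (\<lambda>k. \<Sum>p\<in>A. c p * f (v p) k)"
  using \<open>finite A\<close>
proof (induction A rule: finite_induct)
  case empty
  then show ?case using lin_zero[OF \<open>lin f\<close>] by simp
next
  case (insert p A)
  have "f (\<lambda>i. \<Sum>q\<in>insert p A. c q * v q i) = f (\<lambda>i. c p * v p i + (\<Sum>q\<in>A. c q * v q i))"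
    using insert by simp
  also have "\<dots> = (\<lambda>k. c p * f (v p) k + f (\<lambda>i. \<Sum>q\<in>A. c q * v q i) k)"
    using linD[OF \<open>lin f\<close>, of "c p" "v p" 1 "\<lambda>i. \<Sum>q\<in>A. c q * v q i"] by simp
  also have "\<dots> = (\<lambda>k. \<Sum>q\<in>insert p A. c q * f (v q) k)"
    using insert by simp
  finally show ?case .
qed

lemma vec_expand: "x = (\<lambda>i. \<Sum>p\<in>UNIV. x p * bv p i)" for x :: "('a::finite) vec"
  by (rule ext) (simp add: bv_def if_distrib cong: if_cong)

lemma lin_expand: "lin f \<Longrightarrow> f x = (\<lambda>k. \<Sum>p\<in>UNIV. x p * f (bv p) k)"
  for x :: "('a::finite) vec"
  using lin_sum[of f UNIV x bv] vec_expand[of x] by simp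

lemma lin_expand_at: "lin f \<Longrightarrow> f x k = (\<Sum>p\<in>UNIV. x p * f (bv p) k)"
  for x :: "('a::finite) vec"
  by (simp add: lin_expand[of f x])

lemma bilin_expand:
  assumes "\<And>z. lin (\<lambda>x. f x z)" and "\<And>z. lin (f z)"
  shows "f x y k = (\<Sum>p\<in>UNIV. \<Sum>q\<in>UNIV. x p * y q * f (bv p) (bv q) k)"
proof -
  have "f x y k = (\<Sum>p\<in>UNIV. x p * f (bv p) y k)" using lin_expand_at[OF assms(1)] .
  also have "\<dots> = (\<Sum>p\<in>UNIV. x p * (\<Sum>q\<in>UNIV. y q * f (bv p) (bv q) k))"
  proof -
    have "f (bv p) y k = (\<Sum>q\<in>UNIV. y q * f (bv p) (bv q) k)" for p
      using lin_expand_at[OF assms(2)[of "bv p"], of y k] by simp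
    then show ?thesis by simp
  qed
  finally show ?thesis by (simp add: sum_distrib_left mult.assoc)
qed

lemma bilin_ext:
  assumes "\<And>z. lin (\<lambda>x. f x z)" "\<And>z. lin (f z)" "\<And>z. lin (\<lambda>x. g x z)" "\<And>z. lin (g z)"
    and "\<And>p q. f (bv p) (bv q) = g (bv p) (bv q)"
  shows "f x y = g x y"
proof (rule ext)
  fix k
  show "f x y k = g x y k"
    unfolding bilin_expand[where f=f and x=x and y=y and k=k, OF assms(1,2)]
      bilin_expand[where f=g and x=x and y=y and k=k, OF assms(3,4)] assms(5) ..
qed

lemma pair_add2: "pair a (\<lambda>i. x i + y i) = pair a x + pair a y"
  by (simp add: pair_def algebra_simps sum.distrib)
lemma pair_add1: "pair (\<lambda>i. x i + y i) a = pair x a + pair y a"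
  by (simp add: pair_def algebra_simps sum.distrib)
lemma pair_diff2: "pair a (\<lambda>i. x i - y i) = pair a x - pair a y"
  by (simp add: pair_def algebra_simps sum_subtractf)
lemma pair_diff1: "pair (\<lambda>i. x i - y i) a = pair x a - pair y a"
  by (simp add: pair_def algebra_simps sum_subtractf)
lemma pair_smult2: "pair a (\<lambda>i. c * x i) = c * pair a x"
  by (simp add: pair_def algebra_simps sum_distrib_left)
lemma pair_smult1: "pair (\<lambda>i. c * x i) a = c * pair x a"
  by (simp add: pair_def algebra_simps sum_distrib_left)
lemma pair_neg2: "pair a (\<lambda>i. - x i) = - pair a x"
  by (simp add: pair_def sum_negf)
lemma pair_neg1: "pair (\<lambda>i. - x i) a = - pair x a"
  by (simp add: pair_def sum_negf)
lemma pair_zero2: "pair a (\<lambda>i. 0) = 0"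
  by (simp add: pair_def)
lemma pair_zero1: "pair (\<lambda>i. 0) a = 0"
  by (simp add: pair_def)
lemma pair_comm: "pair a x = pair x a"
  by (simp add: pair_def mult.commute)

lemma pair_bv2: "pair a (bv j) = a j"
proof -
  have "pair a (bv j) = (\<Sum>i\<in>UNIV. if i = j then a i else 0)"
    unfolding pair_def bv_def by (rule sum.cong) auto
  then show ?thesis by simp
qed

lemma pair_bv1: "pair (bv j) a = a j"
  using pair_bv2[of a j] by (simp add: pair_comm)

lemma pair_sum2: "pair a (\<lambda>k. \<Sum>j\<in>UNIV. c j * v j k) = (\<Sum>j\<in>UNIV. c j * pair a (v j))"
  unfolding pair_def by (simp add: sum_distrib_left algebra_simps) (rule sum.swap)

lemmas pair_simps = pair_add2 pair_add1 pair_diff2 pair_diff1 pair_smult2 pair_smult1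
  pair_neg2 pair_neg1 pair_zero2 pair_zero1 pair_bv2 pair_bv1

lemma vec_eq_pair: "(\<And>c. pair c V = pair c W) \<Longrightarrow> V = W"
proof (rule ext)
  fix j
  assume "\<And>c. pair c V = pair c W"
  from this[of "bv j"] show "V j = W j" by (simp add: pair_bv1)
qed

lemma lie_lin1: "lie_algebra B \<Longrightarrow> lin (\<lambda>x. B x z)"
  unfolding lie_algebra_def lin_def by blast

lemma lie_lin2: "lie_algebra B \<Longrightarrow> lin (B z)"
  unfolding lie_algebra_def lin_def by blast

lemma lie_self: "lie_algebra B \<Longrightarrow> B x x = (\<lambda>k. 0)"
  unfolding lie_algebra_def by blast

lemma lie_jacobi: "lie_algebra B \<Longrightarrow> B x (B y z) k + B y (B z x) k + B z (B x y) k = 0"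
  unfolding lie_algebra_def by (metis (no_types, lifting))

lemmas lie_bilin = lin_rules[OF lie_lin1] lin_rules[OF lie_lin2]

text \<open>Skew-symmetry follows from alternation by polarization.\<close>
lemma lie_skew:
  assumes "lie_algebra B"
  shows "B y x = (\<lambda>k. - B x y k)"
proof -
  have "B (\<lambda>i. x i + y i) (\<lambda>i. x i + y i) = (\<lambda>k. B x x k + B x y k + B y x k + B y y k)"
    by (simp add: lie_bilin[OF assms] add.assoc)
  then show ?thesis
    by (simp add: lie_self[OF assms] fun_eq_iff eq_neg_iff_add_eq_0 add.commute)
qed

lemma bracket_expand: "lie_algebra B \<Longrightarrow>
  B x y k = (\<Sum>p\<in>UNIV. \<Sum>q\<in>UNIV. x p * y q * B (bv p) (bv q) k)"
  by (rule bilin_expand[OF lie_lin1 lie_lin2])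

lemma T12_13_eq: "lie_algebra B \<Longrightarrow> T12_13 B t u v w = B (\<lambda>p. t p v) (\<lambda>p. t p w) u"
  unfolding T12_13_def by (simp add: bracket_expand)
lemma T12_23_eq: "lie_algebra B \<Longrightarrow> T12_23 B t u v w = B (t u) (\<lambda>p. t p w) v"
  unfolding T12_23_def by (simp add: bracket_expand)
lemma T13_23_eq: "lie_algebra B \<Longrightarrow> T13_23 B t u v w = B (t u) (t v) w"
  unfolding T13_23_def by (simp add: bracket_expand)

lemma ad_tensor_eq: "lie_algebra B \<Longrightarrow> ad_tensor B X t u v = B X (\<lambda>p. t p v) u + B X (t u) v"
  unfolding ad_tensor_def by (simp add: lin_expand_at[OF lie_lin2])

lemma lie_transfer:
  fixes T :: "('a::finite) vec \<Rightarrow> ('b::finite) vec" and B :: "'a bracket" and S :: "'b bracket"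
  assumes T: "lin T" "inj T" and hom: "\<And>X Y. T (B X Y) = S (T X) (T Y)" and S: "lie_algebra S"
  shows "lie_algebra B"
  unfolding lie_algebra_def
proof (intro conjI allI)
  fix x y z :: "'a vec" and a b :: real
  have "T (B (\<lambda>i. a * x i + b * y i) z) = T (\<lambda>k. a * B x z k + b * B y z k)"
    unfolding hom linD[OF T(1)] linD[OF lie_lin1[OF S]] ..
  then show "B (\<lambda>i. a * x i + b * y i) z = (\<lambda>k. a * B x z k + b * B y z k)"
    by (rule injD[OF T(2)])
  have "T (B z (\<lambda>i. a * x i + b * y i)) = T (\<lambda>k. a * B z x k + b * B z y k)"
    unfolding hom linD[OF T(1)] linD[OF lie_lin2[OF S]] ..
  then show "B z (\<lambda>i. a * x i + b * y i) = (\<lambda>k. a * B z x k + b * B z y k)"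
    by (rule injD[OF T(2)])
next
  fix x :: "'a vec"
  have "T (B x x) = T (\<lambda>k. 0)" unfolding hom lie_self[OF S] lin_zero[OF T(1)] ..
  then show "B x x = (\<lambda>k. 0)" by (rule injD[OF T(2)])
next
  fix x y z :: "'a vec"
  have "T (\<lambda>k. B x (B y z) k + B y (B z x) k + B z (B x y) k) = T (\<lambda>k. 0)"
    unfolding lin_add[OF T(1)] hom lin_zero[OF T(1)] using lie_jacobi[OF S] by simp
  then show "(\<lambda>k. B x (B y z) k + B y (B z x) k + B z (B x y) k) = (\<lambda>k. 0)"
    by (rule injD[OF T(2)])
qed

lemma ad_tensor_cocycle:
  assumes L: "lie_algebra B"
  shows "ad_tensor B (B x y) t
    = (\<lambda>u v. ad_tensor B x (ad_tensor B y t) u v - ad_tensor B y (ad_tensor B x t) u v)"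
proof (intro ext)
  fix u v
  have ex: "B a W c = (\<Sum>p\<in>UNIV. W p * B a (bv p) c)" for a W c
    by (rule lin_expand_at[OF lie_lin2[OF L]])
  text \<open>The two adjoint actions on different tensor legs commute.\<close>
  have legs_commute: "B x (\<lambda>p. B y (t p) v) u = B y (\<lambda>q. B x (\<lambda>p. t p q) u) v" for x y
  proof -
    have "B x (\<lambda>p. B y (t p) v) u = (\<Sum>p\<in>UNIV. (\<Sum>q\<in>UNIV. t p q * B y (bv q) v) * B x (bv p) u)"
      unfolding ex[of x "\<lambda>p. B y (t p) v" u] by (simp only: ex[of y "t _" v])
    also have "\<dots> = (\<Sum>p\<in>UNIV. \<Sum>q\<in>UNIV. t p q * B y (bv q) v * B x (bv p) u)"
      by (simp add: sum_distrib_right)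
    also have "\<dots> = (\<Sum>q\<in>UNIV. \<Sum>p\<in>UNIV. t p q * B y (bv q) v * B x (bv p) u)"
      by (rule sum.swap)
    also have "\<dots> = (\<Sum>q\<in>UNIV. (\<Sum>p\<in>UNIV. t p q * B x (bv p) u) * B y (bv q) v)"
      by (simp add: sum_distrib_left sum_distrib_right mult_ac)
    also have "\<dots> = B y (\<lambda>q. B x (\<lambda>p. t p q) u) v"
      unfolding ex[of y "\<lambda>q. B x (\<lambda>p. t p q) u" v] by (simp only: ex[of x "\<lambda>p. t p _" u])
    finally show ?thesis .
  qed
  have ad_rep: "B x (B y W) c - B y (B x W) c = B (B x y) W c" for W c
  proof -
    have "B W x = (\<lambda>k. - B x W k)" "B W (B x y) = (\<lambda>k. - B (B x y) W k)"
      by (rule lie_skew[OF L])+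
    then show ?thesis using lie_jacobi[OF L, of x y W c] by (simp add: lie_bilin[OF L])
  qed
  have col: "(\<lambda>p. ad_tensor B y t p v) = (\<lambda>p. B y (\<lambda>p. t p v) p + B y (t p) v)" for y
    by (simp add: ad_tensor_eq[OF L])
  have row: "ad_tensor B y t u = (\<lambda>q. B y (\<lambda>p. t p q) u + B y (t u) q)" for y
    by (rule ext) (rule ad_tensor_eq[OF L])
  show "ad_tensor B (B x y) t u v
      = ad_tensor B x (ad_tensor B y t) u v - ad_tensor B y (ad_tensor B x t) u v"
    unfolding ad_tensor_eq[OF L, of x "ad_tensor B y t"] ad_tensor_eq[OF L, of y "ad_tensor B x t"] col row
    by (simp add: lie_bilin[OF L] ad_tensor_eq[OF L] legs_commute[of x y] legs_commute[of y x]
        ad_rep[symmetric])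
qed

section \<open>Factorizable solutions from an invariant form and a complex mCYBE operator\<close>

text \<open>A Lie algebra whose coordinate space is identified with its dual by an involutive
  self-adjoint map g, so that form X Y = \<langle>g X, Y\<rangle> is an invariant nondegenerate
  symmetric form, together with a skew-adjoint J solving the modified CYBE
  [JX, JY] = J[JX, Y] + J[X, JY] + [X, Y], and a sign \<sigma>.\<close>
locale quadratic_mcybe =
  fixes br :: "('n::finite) bracket" and g :: "'n vec \<Rightarrow> 'n vec" and J :: "'n vec \<Rightarrow> 'n vec"
    and \<sigma> :: real
  assumes lie: "lie_algebra br"
    and g_lin: "lin g" and g_invol: "\<And>X. g (g X) = X"
    and g_sym: "\<And>X Y. pair (g X) Y = pair X (g Y)"
    and g_invariant: "\<And>X Y Z. pair (g (br X Y)) Z = pair (g X) (br Y Z)"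
    and J_lin: "lin J" and J_skew: "\<And>X Y. pair (g (J X)) Y = - pair (g X) (J Y)"
    and J_mcybe: "\<And>X Y. br (J X) (J Y) = (\<lambda>k. J (br (J X) Y) k + J (br X (J Y)) k + br X Y k)"
    and sign: "\<sigma> * \<sigma> = 1"
begin

lemmas br_lin = lie_bilin[OF lie]
lemmas J_rules = lin_rules[OF J_lin]
lemmas g_rules = lin_rules[OF g_lin]

lemma br_skew: "br y x = (\<lambda>k. - br x y k)"
  by (rule lie_skew[OF lie])

definition form :: "'n vec \<Rightarrow> 'n vec \<Rightarrow> real" where
  "form X Y = pair (g X) Y"

lemma form_sym: "form X Y = form Y X"
  unfolding form_def g_sym[of X] by (rule pair_comm)

lemma form_invariant: "form (br X Y) Z = form X (br Y Z)"
  unfolding form_def by (rule g_invariant)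

lemma form_J: "form (J X) Y = - form X (J Y)"
  unfolding form_def by (rule J_skew)

lemma coord: "X u = form X (g (bv u))"
  unfolding form_def g_sym g_invol pair_bv2 ..

lemma form_lin2:
  "form X (\<lambda>i. x i + y i) = form X x + form X y" "form X (\<lambda>i. x i - y i) = form X x - form X y"
  "form X (\<lambda>i. a * x i) = a * form X x" "form X (\<lambda>i. - x i) = - form X x"
  unfolding form_def by (simp_all add: pair_simps)

lemma form_lin1:
  "form (\<lambda>i. x i + y i) X = form x X + form y X" "form (\<lambda>i. x i - y i) X = form x X - form y X"
  "form (\<lambda>i. a * x i) X = a * form x X" "form (\<lambda>i. - x i) X = - form x X"
  by (simp_all only: form_sym[of _ X] form_lin2)

lemmas form_lin = form_lin1 form_lin2

lemma form_ad_antisym: "form (br X A) C = - form (br X C) A"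
proof -
  have "form (br X A) C = - form (br A X) C" using br_skew[of A X] by (simp add: form_lin)
  also have "\<dots> = - form A (br X C)" by (simp add: form_invariant)
  finally show ?thesis by (simp add: form_sym[of A])
qed

lemma form_ad_skew: "form X (br e Z) = - form (br X Z) e"
proof -
  have "form X (br e Z) = form (br X e) Z" by (simp add: form_invariant)
  then show ?thesis using form_ad_antisym[of X e Z] by simp
qed

definition Rplus :: "'n vec \<Rightarrow> 'n vec" where "Rplus Z = (\<lambda>k. J Z k + \<sigma> * Z k)"
definition Rminus :: "'n vec \<Rightarrow> 'n vec" where "Rminus Z = (\<lambda>k. \<sigma> * Z k - J Z k)"

lemma form_Rminus: "form (Rminus A) C = form A (Rplus C)"
  unfolding Rminus_def Rplus_def by (simp add: form_lin form_J)

lemma Rplus_lin: "lin Rplus"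
  unfolding Rplus_def by (rule linI) (simp add: J_rules algebra_simps)

lemma Rminus_lin: "lin Rminus"
  unfolding Rminus_def by (rule linI) (simp add: J_rules algebra_simps)

text \<open>The modified CYBE, rewritten in terms of R+ and R-: this is where \<sigma>^2 = 1 enters.\<close>
lemma Rplus_Rminus_identity:
  "(\<lambda>k. Rplus (br (Rminus Z) X) k + br (Rplus X) (Rminus Z) k - Rminus (br (Rplus X) Z) k)
   = (\<lambda>k. -2 * br X Z k)"
proof (rule ext)
  fix k
  have s: "br Z X = (\<lambda>k. - br X Z k)" "br (J Z) X = (\<lambda>k. - br X (J Z) k)"
    "br (J Z) (J X) = (\<lambda>k. - br (J X) (J Z) k)" "br Z (J X) = (\<lambda>k. - br (J X) Z k)"
    by (rule br_skew)+
  have m: "br (J X) (J Z) k = J (br (J X) Z) k + J (br X (J Z)) k + br X Z k"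
    using J_mcybe[of X Z] by simp
  show "Rplus (br (Rminus Z) X) k + br (Rplus X) (Rminus Z) k - Rminus (br (Rplus X) Z) k
      = -2 * br X Z k"
    unfolding Rplus_def Rminus_def by (simp add: br_lin J_rules s m algebra_simps sign)
qed

text \<open>Paired with Y, the same identity is the type II CYBE for the tensor of R+ g,
  written as an identity of the invariant form.\<close>
lemma form_cybe_identity:
  "form (br (Rminus Y) (Rminus Z)) X + form (br (Rplus X) (Rminus Z)) Y
   + form (br (Rplus X) (Rplus Y)) Z = 2 * form (br X Y) Z"
proof -
  have term1: "form (br (Rminus Y) (Rminus Z)) X = form Y (Rplus (br (Rminus Z) X))"
    by (simp only: form_invariant form_Rminus)
  have term2: "form (br (Rplus X) (Rminus Z)) Y = form Y (br (Rplus X) (Rminus Z))"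
    by (rule form_sym)
  have term3: "form (br (Rplus X) (Rplus Y)) Z = - form Y (Rminus (br (Rplus X) Z))"
  proof -
    have "form (br (Rplus X) (Rplus Y)) Z = form (Rplus X) (br (Rplus Y) Z)"
      by (rule form_invariant)
    also have "\<dots> = - form (br (Rplus X) Z) (Rplus Y)"
      by (rule form_ad_skew)
    also have "\<dots> = - form (Rminus (br (Rplus X) Z)) Y" by (simp add: form_Rminus)
    finally show ?thesis using form_sym[of Y] by simp
  qed
  have rhs: "2 * form (br X Y) Z = form Y (\<lambda>k. -2 * br X Z k)"
  proof -
    have "form (br X Y) Z = form X (br Y Z)" by (rule form_invariant)
    also have "\<dots> = - form (br X Z) Y" by (rule form_ad_skew)
    finally have "form (br X Y) Z = - form (br X Z) Y" .
    then show ?thesis by (simp add: form_lin form_sym[of Y])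
  qed
  show ?thesis
    unfolding term1 term2 term3 rhs Rplus_Rminus_identity[symmetric] by (simp add: form_lin)
qed

text \<open>The tensor of J g^{-1} + \<sigma> g^{-1} (recall g^{-1} = g).\<close>
definition rt :: "'n tensor2" where
  "rt = tensor_of (\<lambda>\<xi> k. J (g \<xi>) k + \<sigma> * g \<xi> k)"

abbreviation gb :: "'n \<Rightarrow> 'n vec" where "gb u \<equiv> g (bv u)"

lemma g_swap: "gb p v = gb v p"
  by (simp only: coord[of "gb p" v] coord[of "gb v" p] form_sym[of "gb p"])

lemma J_swap: "J (gb p) v = - J (gb v) p"
proof -
  have "J (gb p) v = - form (gb p) (J (gb v))" by (simp add: coord[of _ v] form_J)
  also have "\<dots> = - J (gb v) p" by (simp add: form_sym[of "gb p"] coord[symmetric])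
  finally show ?thesis .
qed

lemma rt_row: "rt u = Rplus (gb u)"
  unfolding rt_def tensor_of_def Rplus_def by simp

lemma rt_col: "(\<lambda>p. rt p v) = Rminus (gb v)"
proof (rule ext)
  fix p
  show "rt p v = Rminus (gb v) p"
    unfolding rt_def tensor_of_def Rminus_def using J_swap[of p v] g_swap[of p v] by simp
qed

lemma rt_symmetrized: "rt p q + rt q p = 2 * \<sigma> * gb p q"
  unfolding rt_def tensor_of_def by (simp add: J_swap[of q p] g_swap[of q p])

lemma rt_cybe_II: "cybe_II br rt"
  unfolding cybe_II_def cybe_lhs_def
proof (intro allI)
  fix u v w
  have T12_13_form: "T12_13 br rt u v w = form (br (Rminus (gb v)) (Rminus (gb w))) (gb u)"
    by (simp add: T12_13_eq[OF lie] rt_col coord[symmetric])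
  have T12_23_form: "T12_23 br rt u v w = form (br (Rplus (gb u)) (Rminus (gb w))) (gb v)"
    unfolding T12_23_eq[OF lie] rt_col by (simp add: rt_row coord[symmetric])
  have T13_23_form: "T13_23 br rt u v w = form (br (Rplus (gb u)) (Rplus (gb v))) (gb w)"
    by (simp add: T13_23_eq[OF lie] rt_row coord[symmetric])
  have T13_23_sym_form: "T13_23 br (\<lambda>p q. rt p q + rt q p) u v w = 4 * form (br (gb u) (gb v)) (gb w)"
  proof -
    have "T13_23 br (\<lambda>p q. rt p q + rt q p) u v w
        = br (\<lambda>q. (2 * \<sigma>) * gb u q) (\<lambda>q. (2 * \<sigma>) * gb v q) w"
      by (simp add: rt_symmetrized T13_23_eq[OF lie])
    also have "\<dots> = 4 * (\<sigma> * \<sigma>) * br (gb u) (gb v) w" by (simp add: br_lin)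
    finally show ?thesis by (simp add: sign coord[symmetric])
  qed
  show "T12_13 br rt u v w + T12_23 br rt u v w + T13_23 br rt u v w =
         1 / 2 * T13_23 br (\<lambda>p q. rt p q + rt q p) u v w"
    unfolding T12_13_form T12_23_form T13_23_form T13_23_sym_form form_cybe_identity by simp
qed

lemma sym_part_rt: "sym_part rt = (\<lambda>p q. \<sigma> * gb p q)"
  unfolding sym_part_def by (simp add: rt_symmetrized)

text \<open>Invariance of the symmetric part is invariance of the form.\<close>
lemma sym_part_invariant: "invariant_tensor br (sym_part rt)"
  unfolding invariant_tensor_def
proof (intro allI ext)
  fix X u v
  have "ad_tensor br X (sym_part rt) u v = \<sigma> * (br X (gb v) u + br X (gb u) v)"
  proof -
    have "(\<lambda>p. gb p v) = gb v" using g_swap[of _ v] by (simp add: fun_eq_iff)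
    then show ?thesis by (simp add: ad_tensor_eq[OF lie] sym_part_rt br_lin algebra_simps)
  qed
  also have "\<dots> = 0"
    using form_ad_antisym[of X "gb v" "gb u"] by (simp add: coord[symmetric])
  finally show "ad_tensor br X (sym_part rt) u v = 0" .
qed

text \<open>The symmetric part acts as \<sigma> g, which is its own inverse.\<close>
lemma sym_part_bij: "bij (tensor_map (sym_part rt))"
proof -
  have tm: "tensor_map (sym_part rt) = (\<lambda>a j. \<sigma> * g a j)"
  proof (intro ext)
    fix a j
    show "tensor_map (sym_part rt) a j = \<sigma> * g a j"
      unfolding tensor_map_def sym_part_rt lin_expand_at[OF g_lin, of a j]
      by (simp add: sum_distrib_left algebra_simps)
  qed
  have "(\<lambda>a j. \<sigma> * g a j) \<circ> (\<lambda>a j. \<sigma> * g a j) = id"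
    by (rule ext) (simp add: g_rules g_invol mult.assoc[symmetric] sign)
  then show ?thesis unfolding tm using o_bij by blast
qed

definition brJ :: "'n bracket" where
  "brJ X Y = (\<lambda>k. br X (J Y) k + br (J X) Y k)"

lemma J_brJ: "J (brJ Y Z) = (\<lambda>k. br (J Y) (J Z) k - br Y Z k)"
  unfolding brJ_def J_mcybe by (simp add: J_rules fun_eq_iff)

text \<open>The Jacobi identity for [,]_J is a sum of four Jacobi identities for [,].\<close>
lemma brJ_jacobi: "brJ X (brJ Y Z) k + brJ Y (brJ Z X) k + brJ Z (brJ X Y) k = 0"
proof -
  have expand: "brJ X (brJ Y Z) k = br X (br (J Y) (J Z)) k - br X (br Y Z) k
     + br (J X) (br Y (J Z)) k + br (J X) (br (J Y) Z) k" for X Y Z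
    unfolding brJ_def[of X] J_brJ by (simp add: br_lin brJ_def)
  show ?thesis unfolding expand
    using lie_jacobi[OF lie, of X Y Z k] lie_jacobi[OF lie, of X "J Y" "J Z" k]
      lie_jacobi[OF lie, of Y "J Z" "J X" k] lie_jacobi[OF lie, of Z "J X" "J Y" k]
    by linarith
qed

lemma lie_brJ: "lie_algebra brJ"
  unfolding lie_algebra_def
proof (intro conjI allI)
  fix x y z :: "'n vec" and a b :: real
  show "brJ (\<lambda>i. a * x i + b * y i) z = (\<lambda>k. a * brJ x z k + b * brJ y z k)"
    unfolding brJ_def by (simp add: J_rules br_lin algebra_simps)
  show "brJ z (\<lambda>i. a * x i + b * y i) = (\<lambda>k. a * brJ z x k + b * brJ z y k)"
    unfolding brJ_def by (simp add: J_rules br_lin algebra_simps)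
next
  fix x :: "'n vec"
  show "brJ x x = (\<lambda>k. 0)"
    unfolding brJ_def using br_skew[of x "J x"] by simp
next
  fix x y z :: "'n vec"
  show "(\<lambda>k. brJ x (brJ y z) k + brJ y (brJ z x) k + brJ z (brJ x y) k) = (\<lambda>k. 0)"
    using brJ_jacobi by simp
qed

lemma cobracket_dual_eq: "cobracket_dual (coboundary br rt) \<xi> \<eta> = g (brJ (g \<xi>) (g \<eta>))"
proof (rule ext)
  fix k
  let ?X = "g \<xi>" and ?Y = "g \<eta>" and ?e = "bv k :: 'n vec"
  have cob: "coboundary br rt ?e p q = br ?e (Rminus (gb q)) p + br ?e (Rplus (gb p)) q" for p q
    unfolding coboundary_def ad_tensor_eq[OF lie] rt_col unfolding rt_row ..
  have sum_minus: "(\<Sum>q\<in>UNIV. \<eta> q * br ?e (Rminus (gb q)) p) = br ?e (Rminus ?Y) p" for p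
  proof -
    have "lin (\<lambda>y. br ?e (Rminus (g y)))"
      using lin_comp[OF lie_lin2[OF lie, of ?e] lin_comp[OF Rminus_lin g_lin]] by simp
    from lin_expand_at[OF this, of \<eta> p] show ?thesis by simp
  qed
  have sum_plus: "(\<Sum>p\<in>UNIV. \<xi> p * pair \<eta> (br ?e (Rplus (gb p)))) = pair \<eta> (br ?e (Rplus ?X))"
  proof -
    have "lin (\<lambda>y. br ?e (Rplus (g y)))"
      using lin_comp[OF lie_lin2[OF lie, of ?e] lin_comp[OF Rplus_lin g_lin]] by simp
    from lin_expand[OF this, of \<xi>] show ?thesis by (simp add: pair_sum2)
  qed
  have "cobracket_dual (coboundary br rt) \<xi> \<eta> k
     = (\<Sum>p\<in>UNIV. \<xi> p * (\<Sum>q\<in>UNIV. \<eta> q * br ?e (Rminus (gb q)) p))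
     + (\<Sum>p\<in>UNIV. \<xi> p * pair \<eta> (br ?e (Rplus (gb p))))"
    unfolding cobracket_dual_def cob
    by (simp add: algebra_simps sum.distrib sum_distrib_left pair_def)
  also have "\<dots> = form ?X (br ?e (Rminus ?Y)) + form ?Y (br ?e (Rplus ?X))"
    unfolding sum_minus sum_plus form_def g_invol by (simp add: pair_def)
  also have "\<dots> = - form (br ?X (Rminus ?Y)) ?e - form (br ?Y (Rplus ?X)) ?e"
    by (simp add: form_ad_skew)
  also have "\<dots> = form (brJ ?X ?Y) ?e"
  proof -
    have s: "br ?Y ?X = (\<lambda>k. - br ?X ?Y k)" "br ?Y (J ?X) = (\<lambda>k. - br (J ?X) ?Y k)"
      by (rule br_skew)+
    show ?thesis unfolding Rminus_def Rplus_def brJ_def by (simp add: br_lin s form_lin)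
  qed
  also have "\<dots> = g (brJ ?X ?Y) k"
    unfolding form_def pair_bv2 ..
  finally show "cobracket_dual (coboundary br rt) \<xi> \<eta> k = g (brJ ?X ?Y) k" .
qed

lemma lie_cobracket_dual: "lie_algebra (cobracket_dual (coboundary br rt))"
proof (rule lie_transfer[OF g_lin _ _ lie_brJ])
  show "inj g" by (metis g_invol injI)
  show "g (cobracket_dual (coboundary br rt) X Y) = brJ (g X) (g Y)" for X Y
    by (simp add: cobracket_dual_eq g_invol)
qed

lemma coboundary_bialgebra: "lie_bialgebra br (coboundary br rt)"
  unfolding lie_bialgebra_def
proof (intro conjI allI)
  show "lie_algebra br" by (rule lie)
  show "lie_algebra (cobracket_dual (coboundary br rt))" by (rule lie_cobracket_dual)
next
  fix x y :: "'n vec" and a b :: real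
  show "coboundary br rt (\<lambda>i. a * x i + b * y i)
      = (\<lambda>u v. a * coboundary br rt x u v + b * coboundary br rt y u v)"
    unfolding coboundary_def by (intro ext) (simp add: ad_tensor_eq[OF lie] br_lin algebra_simps)
next
  fix x :: "'n vec" and u v
  have "br x (gb v) u = - br x (gb u) v"
    using form_ad_antisym[of x "gb v" "gb u"] by (simp add: coord[symmetric])
  then show "coboundary br rt x u v = - coboundary br rt x v u"
    unfolding coboundary_def ad_tensor_eq[OF lie] rt_col unfolding rt_row Rminus_def Rplus_def
    by (simp add: br_lin)
next
  fix x y :: "'n vec"
  show "coboundary br rt (br x y)
      = (\<lambda>u v. ad_tensor br x (coboundary br rt y) u v - ad_tensor br y (coboundary br rt x) u v)"
    unfolding coboundary_def by (rule ad_tensor_cocycle[OF lie])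
qed

theorem rt_factorizable:
  "cybe_II br rt \<and> invariant_tensor br (sym_part rt) \<and> bij (tensor_map (sym_part rt))
   \<and> factorizable_typeII br rt"
  unfolding factorizable_typeII_def typeII_quasitriangular_def
  using rt_cybe_II sym_part_invariant sym_part_bij coboundary_bialgebra by blast

end

lemma dfst_dpair [simp]: "dfst (dpair x a) = x"
  unfolding dfst_def dpair_def by simp

lemma dsnd_dpair [simp]: "dsnd (dpair x a) = a"
  unfolding dsnd_def dpair_def by simp

lemma double_eq: "dfst V = dfst W \<Longrightarrow> dsnd V = dsnd W \<Longrightarrow> V = W"
proof (rule ext)
  fix k
  assume a: "dfst V = dfst W" and b: "dsnd V = dsnd W"
  show "V k = W k"
  proof (cases k)
    case (Inl i)
    then show ?thesis using fun_cong[OF a, of i] unfolding dfst_def by simp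
  next
    case (Inr i)
    then show ?thesis using fun_cong[OF b, of i] unfolding dsnd_def by simp
  qed
qed

lemma dfst_add: "dfst (\<lambda>k. A k + C k) = (\<lambda>i. dfst A i + dfst C i)" unfolding dfst_def by simp
lemma dsnd_add: "dsnd (\<lambda>k. A k + C k) = (\<lambda>i. dsnd A i + dsnd C i)" unfolding dsnd_def by simp
lemma dfst_diff: "dfst (\<lambda>k. A k - C k) = (\<lambda>i. dfst A i - dfst C i)" unfolding dfst_def by simp
lemma dsnd_diff: "dsnd (\<lambda>k. A k - C k) = (\<lambda>i. dsnd A i - dsnd C i)" unfolding dsnd_def by simp
lemma dfst_smult: "dfst (\<lambda>k. c * A k) = (\<lambda>i. c * dfst A i)" unfolding dfst_def by simp
lemma dsnd_smult: "dsnd (\<lambda>k. c * A k) = (\<lambda>i. c * dsnd A i)" unfolding dsnd_def by simp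
lemma dfst_zero: "dfst (\<lambda>k. 0) = (\<lambda>i. 0)" unfolding dfst_def by simp
lemma dsnd_zero: "dsnd (\<lambda>k. 0) = (\<lambda>i. 0)" unfolding dsnd_def by simp

lemmas components_lin = dfst_add dsnd_add dfst_diff dsnd_diff dfst_smult dsnd_smult dfst_zero dsnd_zero

lemma pair_double:
  "pair (A :: ('i::finite + 'i) vec) C = pair (dfst A) (dfst C) + pair (dsnd A) (dsnd C)"
proof -
  have "pair A C = (\<Sum>k\<in>(UNIV::'i set) <+> (UNIV::'i set). A k * C k)"
    unfolding pair_def by simp
  also have "\<dots> = pair (dfst A) (dfst C) + pair (dsnd A) (dsnd C)"
    by (subst sum.Plus) (simp_all add: pair_def dfst_def dsnd_def o_def)
  finally show ?thesis .
qed

lemma phi_eq: "phi X = dpair (dsnd X) (dfst X)"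
proof -
  have "dfst (bv (Inl i)) = bv i" "dsnd (bv (Inl i)) = (\<lambda>j. 0)"
    "dfst (bv (Inr i)) = (\<lambda>j. 0)" "dsnd (bv (Inr i)) = bv i" for i :: 'a
    unfolding dfst_def dsnd_def bv_def by auto
  then show ?thesis
    by (intro ext) (simp add: phi_def Bp_def pair_simps dpair_def split: sum.split)
qed

lemma pair_phi: "pair (phi X) Y = Bp X Y"
  unfolding phi_eq pair_double Bp_def by simp

lemma phi_invol: "phi (phi X) = X"
  by (rule double_eq) (simp_all add: phi_eq)

lemma inv_phi: "inv phi = phi"
  by (rule inv_equality) (simp_all add: phi_invol)

lemma phi_sym: "pair (phi X) Y = pair X (phi Y)"
  unfolding pair_phi pair_comm[of X] pair_phi Bp_def by (simp add: pair_comm)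

lemma phi_lin: "lin phi"
  by (rule linI, rule double_eq) (simp_all add: phi_eq components_lin)

section \<open>The Drinfeld double of a triangular Lie bialgebra with invertible r\<close>

locale invertible_triangular =
  fixes B :: "('i::finite) bracket" and r :: "'i tensor2"
  assumes triangular: "triangular B r" and r_bij: "bij (tensor_map r)"
begin

abbreviation rho :: "'i vec \<Rightarrow> 'i vec" where "rho \<equiv> tensor_map r"
abbreviation psi :: "'i vec \<Rightarrow> 'i vec" where "psi \<equiv> inv (tensor_map r)"
abbreviation Bd :: "('i + 'i) bracket" where "Bd \<equiv> double_br B r"

lemma lie: "lie_algebra B"
  using triangular unfolding triangular_def by blast

lemma r_skew: "r p q = - r q p"
  using triangular unfolding triangular_def by blast

lemma r_cybe: "cybe B r"
  using triangular unfolding triangular_def by blast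

lemmas B_lin = lie_bilin[OF lie]

lemma B_skew: "B y x = (\<lambda>k. - B x y k)"
  by (rule lie_skew[OF lie])

lemma rho_lin: "lin rho"
  unfolding lin_def tensor_map_def by (simp add: algebra_simps sum.distrib sum_distrib_left)

lemma rho_psi: "rho (psi x) = x"
  using r_bij by (simp add: bij_def surj_f_inv_f)

lemma psi_rho: "psi (rho a) = a"
  using r_bij by (simp add: bij_def inv_f_f)

lemma psi_lin: "lin psi"
proof (rule linI)
  fix x y :: "'i vec" and a b :: real
  have "rho (\<lambda>k. a * psi x k + b * psi y k) = (\<lambda>i. a * x i + b * y i)"
    using linD[OF rho_lin, of a "psi x" b "psi y"] by (simp add: rho_psi)
  then show "psi (\<lambda>i. a * x i + b * y i) = (\<lambda>k. a * psi x k + b * psi y k)"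
    by (metis psi_rho)
qed

lemmas rho_rules = lin_rules[OF rho_lin]
lemmas psi_rules = lin_rules[OF psi_lin]

lemma rho_skew: "pair (rho a) b = - pair a (rho b)"
proof -
  have "pair (rho a) b = (\<Sum>j\<in>UNIV. \<Sum>i\<in>UNIV. a i * r i j * b j)"
    unfolding pair_def tensor_map_def by (simp add: sum_distrib_right)
  also have "\<dots> = (\<Sum>i\<in>UNIV. \<Sum>j\<in>UNIV. a i * r i j * b j)" by (rule sum.swap)
  also have "\<dots> = - (\<Sum>i\<in>UNIV. \<Sum>j\<in>UNIV. a i * (b j * r j i))"
  proof -
    have "a i * r i j * b j = - (a i * (b j * r j i))" for i j using r_skew[of j i] by simp
    then show ?thesis by (simp only: sum_negf)
  qed
  also have "\<dots> = - pair a (rho b)"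
    unfolding pair_def tensor_map_def by (simp add: sum_distrib_left)
  finally show ?thesis .
qed

lemma psi_skew: "pair (psi x) y = - pair x (psi y)"
  using rho_skew[of "psi x" "psi y"] by (simp add: rho_psi)

lemma coad_pair: "pair (coad B x a) y = - pair a (B x y)"
proof -
  have "pair (coad B x a) y = - pair a (\<lambda>k. \<Sum>j\<in>UNIV. y j * B x (bv j) k)"
    unfolding coad_def pair_def[of _ y] by (simp add: pair_sum2 sum_negf mult.commute)
  then show ?thesis
    using lin_expand[OF lie_lin2[OF lie], of x y] by simp
qed

lemma coad_lin1: "lin (\<lambda>x. coad B x a)"
  by (rule linI) (simp add: coad_def B_lin pair_simps algebra_simps)

lemma coad_lin2: "lin (coad B x)"
  by (rule linI) (simp add: coad_def pair_simps algebra_simps)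

lemmas coad_rules = lin_rules[OF coad_lin1] lin_rules[OF coad_lin2]

lemma dual_br_lin1: "lin (\<lambda>a. dual_br B r a b)"
  by (rule linI) (simp add: dual_br_def coad_rules rho_rules algebra_simps)

lemma dual_br_lin2: "lin (dual_br B r a)"
  by (rule linI) (simp add: dual_br_def coad_rules rho_rules algebra_simps)

lemma dual_br_pair: "pair (dual_br B r a b) y = - pair b (B (rho a) y) + pair a (B (rho b) y)"
  unfolding dual_br_def by (simp add: pair_simps coad_pair)

lemma coad_dual_pair: "pair (coad_dual B r a x) c = - pair x (dual_br B r a c)"
proof -
  have "pair (coad_dual B r a x) c = - pair x (\<lambda>k. \<Sum>j\<in>UNIV. c j * dual_br B r a (bv j) k)"
    unfolding coad_dual_def pair_def[of _ c] by (simp add: pair_sum2 sum_negf mult.commute)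
  then show ?thesis
    using lin_expand[OF dual_br_lin2, of a c] by simp
qed

lemma r_cybe_basis:
  "B (rho (bv v)) (rho (bv w)) u - B (rho (bv u)) (rho (bv w)) v + B (rho (bv u)) (rho (bv v)) w = 0"
proof -
  have row: "r u = rho (bv u)" for u
  proof (rule ext)
    fix j
    have "rho (bv u) j = (\<Sum>i\<in>UNIV. if i = u then r i j else 0)"
      unfolding tensor_map_def bv_def by (rule sum.cong) auto
    then show "r u j = rho (bv u) j" by simp
  qed
  have col: "(\<lambda>p. r p v) = (\<lambda>p. - rho (bv v) p)" for v
    by (rule ext) (simp add: r_skew[of _ v] row[symmetric])
  have "cybe_lhs B r u v w = 0" using r_cybe unfolding cybe_def by blast
  then show ?thesis
    unfolding cybe_lhs_def T12_13_eq[OF lie] T12_23_eq[OF lie] T13_23_eq[OF lie] col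
    by (simp add: B_lin row)
qed

lemma rho_dual_br: "rho (dual_br B r a b) = B (rho a) (rho b)"
proof (rule bilin_ext[where f="\<lambda>a b. rho (dual_br B r a b)" and g="\<lambda>a b. B (rho a) (rho b)"])
  show "lin (\<lambda>x. rho (dual_br B r x z))" for z using lin_comp[OF rho_lin dual_br_lin1] by simp
  show "lin (\<lambda>x. rho (dual_br B r z x))" for z using lin_comp[OF rho_lin dual_br_lin2] by simp
  show "lin (\<lambda>x. B (rho x) (rho z))" for z using lin_comp[OF lie_lin1[OF lie] rho_lin] by simp
  show "lin (\<lambda>x. B (rho z) (rho x))" for z using lin_comp[OF lie_lin2[OF lie] rho_lin] by simp
  fix p q
  show "rho (dual_br B r (bv p) (bv q)) = B (rho (bv p)) (rho (bv q))"
  proof (rule ext)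
    fix w
    have "rho (dual_br B r (bv p) (bv q)) w = - pair (rho (bv w)) (dual_br B r (bv p) (bv q))"
      using rho_skew[of "bv w" "dual_br B r (bv p) (bv q)"] by (simp add: pair_bv1)
    also have "\<dots> = B (rho (bv p)) (rho (bv w)) q - B (rho (bv q)) (rho (bv w)) p"
      by (simp add: pair_comm[of "rho (bv w)"] dual_br_pair pair_bv1)
    also have "\<dots> = B (rho (bv p)) (rho (bv q)) w" using r_cybe_basis[of q w p] by simp
    finally show "rho (dual_br B r (bv p) (bv q)) w = B (rho (bv p)) (rho (bv q)) w" .
  qed
qed

lemma coad_dual_eq: "coad_dual B r a y = (\<lambda>k. B (rho a) y k + rho (coad B y a) k)"
proof (rule vec_eq_pair)
  fix c
  have "pair c (coad_dual B r a y) = - pair y (dual_br B r a c)"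
    by (subst pair_comm) (rule coad_dual_pair)
  also have "\<dots> = pair c (B (rho a) y) - pair a (B (rho c) y)"
    by (simp add: pair_comm[of y] dual_br_pair)
  moreover have "pair c (rho (coad B y a)) = - pair a (B (rho c) y)"
  proof -
    have "pair c (rho (coad B y a)) = - pair (rho c) (coad B y a)"
      using rho_skew[of c "coad B y a"] by simp
    also have "\<dots> = pair a (B y (rho c))" by (simp add: pair_comm[of "rho c"] coad_pair)
    also have "\<dots> = - pair a (B (rho c) y)" using B_skew[of y "rho c"] by (simp add: pair_simps)
    finally show ?thesis .
  qed
  ultimately show "pair c (coad_dual B r a y) = pair c (\<lambda>k. B (rho a) y k + rho (coad B y a) k)"
    by (simp add: pair_simps)
qed

definition rcoad :: "'i vec \<Rightarrow> 'i vec \<Rightarrow> 'i vec" where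
  "rcoad x u = rho (coad B x (psi u))"

lemma rcoad_lin1: "lin (\<lambda>x. rcoad x u)"
  unfolding rcoad_def using lin_comp[OF rho_lin coad_lin1] by simp

lemma rcoad_lin2: "lin (rcoad x)"
  unfolding rcoad_def using lin_comp[OF rho_lin lin_comp[OF coad_lin2 psi_lin]] by simp

lemmas rcoad_rules = lin_rules[OF rcoad_lin1] lin_rules[OF rcoad_lin2]

lemma rho_coad: "rho (coad B x a) = rcoad x (rho a)"
  unfolding rcoad_def psi_rho ..

lemma rcoad_antisym: "rcoad x v k - rcoad v x k = B x v k"
proof -
  have "rho (dual_br B r (psi x) (psi v)) = B x v"
    unfolding rho_dual_br rho_psi ..
  moreover have "rho (dual_br B r (psi x) (psi v)) = (\<lambda>k. rcoad x v k - rcoad v x k)"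
    unfolding dual_br_def rho_psi rcoad_def by (rule rho_rules)
  ultimately show ?thesis by metis
qed

lemma dfst_double_br: "dfst (Bd X Y) = (\<lambda>k. B (dfst X) (dfst Y) k + B (rho (dsnd X)) (dfst Y) k
    + rcoad (dfst Y) (rho (dsnd X)) k - B (rho (dsnd Y)) (dfst X) k - rcoad (dfst X) (rho (dsnd Y)) k)"
  unfolding double_br_def dfst_dpair coad_dual_eq rho_coad by (simp add: algebra_simps)

lemma rho_dsnd_double_br: "rho (dsnd (Bd X Y)) = (\<lambda>k. B (rho (dsnd X)) (rho (dsnd Y)) k
    + rcoad (dfst X) (rho (dsnd Y)) k - rcoad (dfst Y) (rho (dsnd X)) k)"
  unfolding double_br_def dsnd_dpair by (simp add: rho_rules rho_dual_br rho_coad)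

lemma dfst_J: "dfst (Jmap r lam mu X) = (\<lambda>k. lam * rho (dsnd X) k + mu * dfst X k)"
  unfolding Jmap_def by simp

lemma dsnd_J: "dsnd (Jmap r lam mu X) = (\<lambda>k. ((-1 - mu^2) / lam) * psi (dfst X) k - mu * dsnd X k)"
  unfolding Jmap_def by simp

lemma rho_dsnd_J:
  "rho (dsnd (Jmap r lam mu X)) = (\<lambda>k. ((-1 - mu^2) / lam) * dfst X k - mu * rho (dsnd X) k)"
  unfolding dsnd_J rho_rules rho_psi ..

lemma double_eq_rho: "dfst V = dfst W \<Longrightarrow> rho (dsnd V) = rho (dsnd W) \<Longrightarrow> V = W"
  by (rule double_eq) (metis psi_rho)+

text \<open>In the coordinates
  (x, r a) both sides are polynomial in \<lambda>, \<mu>, \<lambda>^{-1}; they agree using only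
  c \<lambda> = -1 - \<mu>^2 for c = (-1 - \<mu>^2)/\<lambda>, skew-symmetry and rcoad_antisym.\<close>
lemma J_mcybe_double:
  assumes lam: "lam \<noteq> 0"
  shows "Bd (Jmap r lam mu X) (Jmap r lam mu Y) =
    (\<lambda>k. Jmap r lam mu (Bd (Jmap r lam mu X) Y) k + Jmap r lam mu (Bd X (Jmap r lam mu Y)) k + Bd X Y k)"
proof (rule double_eq_rho)
  let ?J = "Jmap r lam mu"
  define x u y v where "x = dfst X" and "u = rho (dsnd X)" and "y = dfst Y" and "v = rho (dsnd Y)"
  define c where "c = (-1 - mu^2) / lam"
  have c_lam: "c * (lam * z) = - z - mu * (mu * z)" for z
  proof -
    have "c * (lam * z) = (c * lam) * z" by (simp only: mult.assoc)
    also have "\<dots> = (-1 - mu^2) * z" unfolding c_def using lam by simp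
    finally show ?thesis by (simp add: power2_eq_square algebra_simps)
  qed
  have skew: "B y x k = - B x y k" "B v x k = - B x v k" "B y u k = - B u y k" "B v u k = - B u v k" for k
    using B_skew by metis+
  have anti: "rcoad y x k = rcoad x y k - B x y k" "rcoad v x k = rcoad x v k - B x v k"
     "rcoad y u k = rcoad u y k - B u y k" "rcoad v u k = rcoad u v k - B u v k" for k
    using rcoad_antisym[of x y k] rcoad_antisym[of x v k] rcoad_antisym[of u y k]
      rcoad_antisym[of u v k] skew by auto
  have rJ: "rho (dsnd (?J Z)) = (\<lambda>k. c * dfst Z k - mu * rho (dsnd Z) k)" for Z
    unfolding c_def by (rule rho_dsnd_J)
  note components = components_lin rho_rules dfst_J rJ dfst_double_br rho_dsnd_double_br
  show "dfst (Bd (?J X) (?J Y)) = dfst (\<lambda>k. ?J (Bd (?J X) Y) k + ?J (Bd X (?J Y)) k + Bd X Y k)"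
    by (rule ext) (simp add: components x_def[symmetric] u_def[symmetric] y_def[symmetric]
        v_def[symmetric] B_lin rcoad_rules skew anti algebra_simps c_lam)
  show "rho (dsnd (Bd (?J X) (?J Y)))
      = rho (dsnd (\<lambda>k. ?J (Bd (?J X) Y) k + ?J (Bd X (?J Y)) k + Bd X Y k))"
    by (rule ext) (simp add: components x_def[symmetric] u_def[symmetric] y_def[symmetric]
        v_def[symmetric] B_lin rcoad_rules skew anti algebra_simps c_lam)
qed

lemma coad_rep: "(\<lambda>k. coad B x (coad B y c) k - coad B y (coad B x c) k) = coad B (B x y) c"
proof (rule vec_eq_pair)
  fix w
  have coad_twice: "pair w (coad B x (coad B y c)) = pair c (B y (B x w))" for x y
    by (simp add: pair_comm[of w] coad_pair)
  have "(\<lambda>k. B y (B x w) k - B x (B y w) k) = (\<lambda>k. - B (B x y) w k)"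
  proof (rule ext)
    fix k
    have "B y (B x w) k = - B y (B w x) k" "B (B x y) w k = - B w (B x y) k"
      using B_skew[of w x] B_skew[of w "B x y"] by (simp_all add: B_lin)
    then show "B y (B x w) k - B x (B y w) k = - B (B x y) w k"
      using lie_jacobi[OF lie, of x y w k] by linarith
  qed
  then have "pair c (\<lambda>k. B y (B x w) k - B x (B y w) k) = pair c (\<lambda>k. - B (B x y) w k)"
    by simp
  then have "pair c (B y (B x w)) - pair c (B x (B y w)) = - pair c (B (B x y) w)"
    by (simp add: pair_simps)
  then show "pair w (\<lambda>k. coad B x (coad B y c) k - coad B y (coad B x c) k) = pair w (coad B (B x y) c)"
    by (simp add: pair_simps coad_twice pair_comm[of w "coad B (B x y) c"] coad_pair)
qed

text \<open>The semidirect product g \<ltimes> g* for the coadjoint action, and the shear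
  (x, a) \<mapsto> (x + r a, a), which maps the double bracket to it.\<close>
definition semidirect_br :: "('i + 'i) bracket" where
  "semidirect_br X Y = dpair (B (dfst X) (dfst Y))
     (\<lambda>k. coad B (dfst X) (dsnd Y) k - coad B (dfst Y) (dsnd X) k)"

definition shear :: "('i + 'i) vec \<Rightarrow> ('i + 'i) vec" where
  "shear X = dpair (\<lambda>k. dfst X k + rho (dsnd X) k) (dsnd X)"

lemma lie_semidirect_br: "lie_algebra semidirect_br"
  unfolding lie_algebra_def
proof (intro conjI allI)
  fix x y z :: "('i + 'i) vec" and a b :: real
  show "semidirect_br (\<lambda>i. a * x i + b * y i) z = (\<lambda>k. a * semidirect_br x z k + b * semidirect_br y z k)"
    by (rule double_eq) (simp_all add: semidirect_br_def components_lin B_lin coad_rules algebra_simps)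
  show "semidirect_br z (\<lambda>i. a * x i + b * y i) = (\<lambda>k. a * semidirect_br z x k + b * semidirect_br z y k)"
    by (rule double_eq) (simp_all add: semidirect_br_def components_lin B_lin coad_rules algebra_simps)
next
  fix x :: "('i + 'i) vec"
  show "semidirect_br x x = (\<lambda>k. 0)"
    by (rule double_eq) (simp_all add: semidirect_br_def components_lin lie_self[OF lie])
next
  fix x y z :: "('i + 'i) vec"
  have rep: "coad B b (coad B a c) k = coad B a (coad B b c) k - coad B (B a b) c k" for a b c k
    using fun_cong[OF coad_rep[of a b c], of k] by simp
  show "(\<lambda>k. semidirect_br x (semidirect_br y z) k + semidirect_br y (semidirect_br z x) k
      + semidirect_br z (semidirect_br x y) k) = (\<lambda>k. 0)"
  proof (rule double_eq)
    show "dfst (\<lambda>k. semidirect_br x (semidirect_br y z) k + semidirect_br y (semidirect_br z x) k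
        + semidirect_br z (semidirect_br x y) k) = dfst (\<lambda>k. 0)"
      using lie_jacobi[OF lie] by (simp add: semidirect_br_def components_lin)
    show "dsnd (\<lambda>k. semidirect_br x (semidirect_br y z) k + semidirect_br y (semidirect_br z x) k
        + semidirect_br z (semidirect_br x y) k) = dsnd (\<lambda>k. 0)"
      by (rule ext) (simp add: semidirect_br_def components_lin coad_rules
          rep[of "dfst x" "dfst y" "dsnd z"] rep[of "dfst y" "dfst z" "dsnd x"]
          rep[of "dfst z" "dfst x" "dsnd y"]
          B_skew[of "dfst z" "dfst y"] B_skew[of "dfst x" "dfst z"] B_skew[of "dfst y" "dfst x"])
  qed
qed

lemma shear_lin: "lin shear"
  by (rule linI, rule double_eq) (simp_all add: shear_def components_lin rho_rules algebra_simps)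

lemma shear_inj: "inj shear"
proof (rule injI)
  fix X Y
  assume eq: "shear X = shear Y"
  have snd: "dsnd X = dsnd Y" using arg_cong[OF eq, of dsnd] by (simp add: shear_def)
  have "dfst (shear X) = dfst (shear Y)" using eq by simp
  then have "dfst X = dfst Y" using snd by (simp add: shear_def fun_eq_iff)
  then show "X = Y" using snd by (rule double_eq)
qed

lemma shear_hom: "shear (Bd X Y) = semidirect_br (shear X) (shear Y)"
proof (rule double_eq)
  have skew: "B (rho (dsnd Y)) (dfst X) k = - B (dfst X) (rho (dsnd Y)) k" for k
    using B_skew by metis
  show "dfst (shear (Bd X Y)) = dfst (semidirect_br (shear X) (shear Y))"
    unfolding shear_def semidirect_br_def dfst_dpair dfst_double_br rho_dsnd_double_br
    by (rule ext) (simp add: B_lin skew)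
  show "dsnd (shear (Bd X Y)) = dsnd (semidirect_br (shear X) (shear Y))"
    unfolding shear_def semidirect_br_def dsnd_dpair dfst_dpair
    by (rule ext) (simp add: double_br_def dual_br_def lin_add[OF coad_lin1])
qed

lemma lie_double_br: "lie_algebra Bd"
  by (rule lie_transfer[where B=Bd and T=shear and S=semidirect_br,
        OF shear_lin shear_inj shear_hom lie_semidirect_br])

text \<open>B_p is preserved by the shear (since r is skew) and is invariant for the
  semidirect bracket; hence it is invariant for the double bracket.\<close>
lemma Bp_shear: "Bp (shear X) (shear Y) = Bp X Y"
  unfolding Bp_def shear_def using rho_skew[of "dsnd X" "dsnd Y"] by (simp add: pair_simps)

lemma Bp_semidirect_invariant: "Bp (semidirect_br X Y) Z = Bp X (semidirect_br Y Z)"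
proof -
  have s: "B (dfst Y) (dfst X) = (\<lambda>k. - B (dfst X) (dfst Y) k)"
    "B (dfst Z) (dfst X) = (\<lambda>k. - B (dfst X) (dfst Z) k)"
    by (rule B_skew)+
  have coad_pair': "pair y (coad B x a) = - pair a (B x y)" for x y a
    by (simp add: pair_comm[of y] coad_pair)
  show ?thesis
    unfolding Bp_def semidirect_br_def
    by (simp add: pair_simps coad_pair coad_pair' s pair_comm[of "dfst _" "B _ _"]) (rule pair_comm)
qed

lemma Bp_double_invariant: "Bp (Bd X Y) Z = Bp X (Bd Y Z)"
proof -
  have "Bp (Bd X Y) Z = Bp (shear (Bd X Y)) (shear Z)" by (simp add: Bp_shear)
  also have "\<dots> = Bp (semidirect_br (shear X) (shear Y)) (shear Z)" by (simp add: shear_hom)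
  also have "\<dots> = Bp (shear X) (semidirect_br (shear Y) (shear Z))" by (rule Bp_semidirect_invariant)
  also have "\<dots> = Bp (shear X) (shear (Bd Y Z))" by (simp add: shear_hom)
  also have "\<dots> = Bp X (Bd Y Z)" by (rule Bp_shear)
  finally show ?thesis .
qed

lemma J_lin: "lin (Jmap r lam mu)"
  by (rule linI, rule double_eq)
    (simp_all add: dfst_J dsnd_J components_lin rho_rules psi_rules algebra_simps)

text \<open>J_{\<lambda>,\<mu>} is skew for B_p, since r and r^{-1} are skew.\<close>
lemma J_skew: "pair (phi (Jmap r lam mu X)) Y = - pair (phi X) (Jmap r lam mu Y)"
  unfolding pair_phi Bp_def dfst_J dsnd_J pair_simps
  using rho_skew[of "dsnd X" "dsnd Y"] psi_skew[of "dfst X" "dfst Y"]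
  by (simp add: algebra_simps add_divide_distrib[symmetric])

lemma double_quadratic_mcybe:
  assumes "lam \<noteq> 0" and "\<sigma> * \<sigma> = 1"
  shows "quadratic_mcybe Bd phi (Jmap r lam mu) \<sigma>"
proof
  show "lie_algebra Bd" by (rule lie_double_br)
  show "pair (phi (Bd X Y)) Z = pair (phi X) (Bd Y Z)" for X Y Z
    by (simp add: pair_phi Bp_double_invariant)
  show "Bd (Jmap r lam mu X) (Jmap r lam mu Y) = (\<lambda>k. Jmap r lam mu (Bd (Jmap r lam mu X) Y) k
      + Jmap r lam mu (Bd X (Jmap r lam mu Y)) k + Bd X Y k)" for X Y
    by (rule J_mcybe_double[OF assms(1)])
  show "pair (phi (Jmap r lam mu X)) Y = - pair (phi X) (Jmap r lam mu Y)" for X Y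
    by (rule J_skew)
qed (simp_all add: phi_lin phi_invol phi_sym J_lin assms(2))

end

theorem proposition4p13:
  fixes B :: "('i::finite) bracket" and r :: "'i tensor2" and lam mu \<sigma> :: real
  assumes "triangular B r"
    and "bij (tensor_map r)"
    and "lam \<noteq> 0"
    and "\<sigma> = 1 \<or> \<sigma> = -1"
  shows "cybe_II (double_br B r) (rtilde r lam mu \<sigma>)
       \<and> invariant_tensor (double_br B r) (sym_part (rtilde r lam mu \<sigma>))
       \<and> bij (tensor_map (sym_part (rtilde r lam mu \<sigma>)))
       \<and> factorizable_typeII (double_br B r) (rtilde r lam mu \<sigma>)"
proof -
  interpret invertible_triangular B r
    using assms(1,2) by (rule invertible_triangular.intro)
  have "\<sigma> * \<sigma> = 1" using assms(4) by auto
  then interpret D: quadratic_mcybe "double_br B r" phi "Jmap r lam mu" \<sigma>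
    using assms(3) by (intro double_quadratic_mcybe)
  have "rtilde r lam mu \<sigma> = D.rt"
    unfolding rtilde_def D.rt_def inv_phi ..
  then show ?thesis using D.rt_factorizable by simp
qed

end
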